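(* Let $d, d' \ge 1$ and $n \ge 1$ be integers, and let $\mathbb{K}=\mathbb{Q}=\{h_1,\dots,h_n\}\subset\mathbb{R}^d$ be any set of node representations. Consider the GAT family of scoring functions $\mathcal{F}_{\mathrm{GAT}}=\{e_{a,W} : a\in\mathbb{R}^{2d'},\ W\in\mathbb{R}^{d'\times d}\}$, where $$e_{a,W}(h_i,h_j)=\mathrm{LeakyReLU}\big(a^{\top}[\,W h_i \,\|\, W h_j\,]\big),$$ with attention coefficients $\alpha_{ij}=\exp(e(h_i,h_j))/\sum_{j'}\exp(e(h_i,h_{j'}))$ obtained by softmax normalization over keys. Then this family computes static attention for $\mathbb{K}$ and $\mathbb{Q}$. In particular, if $n>1$, it does not compute dynamic attention for $\mathbb{K}$ and $\mathbb{Q}$.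
   Context: Here $\|$ denotes vector concatenation and $\mathrm{LeakyReLU}(x)=x$ for $x\ge 0$ and $\mathrm{LeakyReLU}(x)=cx$ for $x<0$ with a fixed slope $0<c<1$. Write $[n]=\{1,\dots,n\}$. Static scoring: a family $\mathcal{F}$ of functions $\mathbb{R}^d\times\mathbb{R}^d\to\mathbb{R}$ computes static scoring for keys $\{k_1,\dots,k_n\}$ and queries $\{q_1,\dots,q_m\}$ if for every $f\in\mathcal{F}$ there is an index $j_f\in[n]$ such that $f(q_i,k_{j_f})\ge f(q_i,k_j)$ for all $i\in[m]$, $j\in[n]$. Dynamic scoring: $\mathcal{F}$ computes dynamic scoring for these keys and queries if for every map $\varphi:[m]\to[n]$ there is $f\in\mathcal{F}$ such that $f(q_i,k_{\varphi(i)})>f(q_i,k_j)$ for all $i\in[m]$ and all $j\in[n]$ with $j\neq\varphi(i)$. A family of attention functions computes static (resp. dynamic) attention if its scoring function family computes static (resp. dynamic) scoring, possibly followed by a monotonic normalization such as softmax. *)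

theory Defs
  imports "HOL-Analysis.Analysis"
begin

definition leaky_relu :: "real \<Rightarrow> real \<Rightarrow> real" where
  "leaky_relu c x = (if x \<ge> 0 then x else c * x)"

definition vconcat :: "real ^ 'm \<Rightarrow> real ^ 'm \<Rightarrow> real ^ ('m + 'm)" where
  "vconcat x y = (\<chi> i. case i of Inl k \<Rightarrow> x $ k | Inr k \<Rightarrow> y $ k)"

definition gat_score ::
  "real \<Rightarrow> real ^ ('d' + 'd') \<Rightarrow> real ^ 'd ^ 'd' \<Rightarrow> real ^ 'd \<Rightarrow> real ^ 'd \<Rightarrow> real" where
  "gat_score c a W hi hj = leaky_relu c (a \<bullet> vconcat (W *v hi) (W *v hj))"

text \<open>The GAT family of scoring functions; the hidden dimension d' is the type argument.\<close>
definition gat_family :: "'d'::finite itself \<Rightarrow> real \<Rightarrow> (real ^ 'd \<Rightarrow> real ^ 'd \<Rightarrow> real) set" where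
  "gat_family _ c = {f. \<exists>(a :: real ^ ('d' + 'd')) (W :: real ^ 'd ^ 'd'). f = gat_score c a W}"

definition static_scoring ::
  "('v \<Rightarrow> 'v \<Rightarrow> real) set \<Rightarrow> (nat \<Rightarrow> 'v) \<Rightarrow> nat \<Rightarrow> (nat \<Rightarrow> 'v) \<Rightarrow> nat \<Rightarrow> bool" where
  "static_scoring F k n q m \<longleftrightarrow>
     (\<forall>f\<in>F. \<exists>jf\<in>{1..n}. \<forall>i\<in>{1..m}. \<forall>j\<in>{1..n}. f (q i) (k jf) \<ge> f (q i) (k j))"

definition dynamic_scoring ::
  "('v \<Rightarrow> 'v \<Rightarrow> real) set \<Rightarrow> (nat \<Rightarrow> 'v) \<Rightarrow> nat \<Rightarrow> (nat \<Rightarrow> 'v) \<Rightarrow> nat \<Rightarrow> bool" where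
  "dynamic_scoring F k n q m \<longleftrightarrow>
     (\<forall>\<phi>. (\<forall>i\<in>{1..m}. \<phi> i \<in> {1..n}) \<longrightarrow>
        (\<exists>f\<in>F. \<forall>i\<in>{1..m}. \<forall>j\<in>{1..n}. j \<noteq> \<phi> i \<longrightarrow> f (q i) (k (\<phi> i)) > f (q i) (k j)))"

text \<open>A family of attention functions computes static (dynamic) attention iff its
  scoring family computes static (dynamic) scoring; the softmax normalisation is
  monotone and does not affect this.\<close>
abbreviation static_attention where "static_attention \<equiv> static_scoring"
abbreviation dynamic_attention where "dynamic_attention \<equiv> dynamic_scoring"

end

theory Submission
  imports Defs
begin

text \<open>The GAT score splits as LeakyReLU(u(h_i) + v(h_j)), since a^T [W h_i || W h_j] is a
  linear function of h_i plus a linear function of h_j. LeakyReLU is monotone, so the key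
  maximizing v is a best key for every query at once: attention is static. Static scoring
  with at least two queries and two keys is never dynamic: for the assignment sending query 1
  to key 1 and query 2 to key 2, the common best key would have to be both.\<close>

lemma inner_vconcat:
  fixes a :: "real ^ ('m::finite + 'm)"
  shows "a \<bullet> vconcat x y = (\<chi> k. a $ Inl k) \<bullet> x + (\<chi> k. a $ Inr k) \<bullet> y"
proof -
  have "a \<bullet> vconcat x y = (\<Sum>i\<in>UNIV <+> UNIV. a $ i * vconcat x y $ i)"
    by (simp add: inner_vec_def UNIV_Plus_UNIV)
  also have "\<dots> = (\<Sum>k\<in>UNIV. a $ Inl k * x $ k) + (\<Sum>k\<in>UNIV. a $ Inr k * y $ k)"
    by (subst sum.Plus) (auto simp: vconcat_def o_def)
  finally show ?thesis
    by (simp add: inner_vec_def)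
qed

lemma mono_leaky_relu:
  assumes "0 \<le> c"
  shows "mono (leaky_relu c)"
proof
  fix x y :: real
  assume "x \<le> y"
  then show "leaky_relu c x \<le> leaky_relu c y"
    using assms unfolding leaky_relu_def
    by (auto intro: mult_left_mono order_trans[OF mult_nonneg_nonpos[of c x]])
qed

lemma gat_score_separable:
  "gat_score c a W = (\<lambda>x y. leaky_relu c ((\<chi> k. a $ Inl k) \<bullet> (W *v x) + (\<chi> k. a $ Inr k) \<bullet> (W *v y)))"
  by (simp add: fun_eq_iff gat_score_def inner_vconcat)

lemma static_scoring_if_separable:
  assumes separable: "\<And>f. f \<in> F \<Longrightarrow> \<exists>g u v. mono g \<and> f = (\<lambda>x y. g (u x + v y :: real))"
    and "1 \<le> n"
  shows "static_scoring F k n q m"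
  unfolding static_scoring_def
proof
  fix f
  assume "f \<in> F"
  then obtain g u v where "mono g" and f: "f = (\<lambda>x y. g (u x + v y :: real))"
    using separable by blast
  have "Max ((\<lambda>j. v (k j)) ` {1..n}) \<in> (\<lambda>j. v (k j)) ` {1..n}"
    using \<open>1 \<le> n\<close> by (intro Max_in) auto
  then obtain jf where jf: "jf \<in> {1..n}" "v (k jf) = Max ((\<lambda>j. v (k j)) ` {1..n})"
    by auto
  then have "\<forall>j\<in>{1..n}. v (k j) \<le> v (k jf)"
    by simp
  then show "\<exists>jf\<in>{1..n}. \<forall>i\<in>{1..m}. \<forall>j\<in>{1..n}. f (q i) (k j) \<le> f (q i) (k jf)"
    using jf(1) unfolding f by (auto intro!: bexI[of _ jf] monoD[OF \<open>mono g\<close>])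
qed

lemma static_gat_family:
  fixes h q :: "nat \<Rightarrow> real ^ 'd"
  assumes "0 \<le> c" and "1 \<le> n"
  shows "static_scoring (gat_family TYPE('d'::finite) c) h n q m"
proof (rule static_scoring_if_separable[OF _ \<open>1 \<le> n\<close>])
  fix f :: "real ^ 'd \<Rightarrow> real ^ 'd \<Rightarrow> real"
  assume "f \<in> gat_family TYPE('d') c"
  then obtain a :: "real ^ ('d' + 'd')" and W :: "real ^ 'd ^ 'd'" where f: "f = gat_score c a W"
    unfolding gat_family_def by blast
  show "\<exists>g u v. mono g \<and> f = (\<lambda>x y. g (u x + v y :: real))"
  proof (intro exI conjI)
    show "mono (leaky_relu c)"
      using mono_leaky_relu \<open>0 \<le> c\<close> .
    show "f = (\<lambda>x y. leaky_relu c ((\<chi> k. a $ Inl k) \<bullet> (W *v x) + (\<chi> k. a $ Inr k) \<bullet> (W *v y)))"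
      unfolding f by (rule gat_score_separable)
  qed
qed

lemma not_dynamic_if_static:
  assumes static: "static_scoring F k n q m" and "2 \<le> n" and "2 \<le> m"
  shows "\<not> dynamic_scoring F k n q m"
proof
  assume "dynamic_scoring F k n q m"
  define \<phi> :: "nat \<Rightarrow> nat" where "\<phi> i = (if i = 1 then 1 else 2)" for i
  have "\<forall>i\<in>{1..m}. \<phi> i \<in> {1..n}"
    using \<open>2 \<le> n\<close> by (auto simp: \<phi>_def)
  then obtain f where "f \<in> F" and favourite:
    "\<forall>i\<in>{1..m}. \<forall>j\<in>{1..n}. j \<noteq> \<phi> i \<longrightarrow> f (q i) (k (\<phi> i)) > f (q i) (k j)"
    using \<open>dynamic_scoring F k n q m\<close> unfolding dynamic_scoring_def by blast
  then obtain jf where "jf \<in> {1..n}"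
    and best: "\<forall>i\<in>{1..m}. \<forall>j\<in>{1..n}. f (q i) (k j) \<le> f (q i) (k jf)"
    using static unfolding static_scoring_def by blast
  have "\<phi> 1 = 1" "\<phi> 2 = 2" "1 \<in> {1..m}" "2 \<in> {1..m}" "1 \<in> {1..n}" "2 \<in> {1..n}"
    using \<open>2 \<le> m\<close> \<open>2 \<le> n\<close> by (auto simp: \<phi>_def)
  moreover have "jf \<noteq> \<phi> 1 \<or> jf \<noteq> \<phi> 2"
    using calculation by auto
  ultimately obtain i where "i \<in> {1..m}" "\<phi> i \<in> {1..n}" "jf \<noteq> \<phi> i"
    by metis
  then have "f (q i) (k (\<phi> i)) > f (q i) (k jf)"
    using favourite \<open>jf \<in> {1..n}\<close> by blast
  moreover have "f (q i) (k (\<phi> i)) \<le> f (q i) (k jf)"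
    using best \<open>i \<in> {1..m}\<close> \<open>\<phi> i \<in> {1..n}\<close> by blast
  ultimately show False
    by simp
qed

theorem theorem1:
  fixes c :: real and n :: nat and h :: "nat \<Rightarrow> real ^ 'd"
  assumes "0 < c" and "c < 1" and "n \<ge> 1"
  shows "static_attention (gat_family TYPE('d'::finite) c) h n h n
       \<and> (n > 1 \<longrightarrow> \<not> dynamic_attention (gat_family TYPE('d'::finite) c) h n h n)"
proof -
  have static: "static_scoring (gat_family TYPE('d') c) h n h n"
    using static_gat_family[of c n] \<open>0 < c\<close> \<open>n \<ge> 1\<close> by simp
  moreover have "n > 1 \<longrightarrow> \<not> dynamic_scoring (gat_family TYPE('d') c) h n h n"
    using not_dynamic_if_static[OF static] by simp
  ultimately show ?thesis
    by blast
qed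

end
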